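(* Let $n,m,k,r$ be positive integers. Then \[S_{\leq m}(n,k,r)=\sum_{i=0}^{m-1}\binom{n-1}{i}\Big((k-1)\,S_{\leq m}(n-i-1,k-1,r)+S_{\leq m}(n-i-1,k,r-1)\Big),\] where summands with $i>n-1$ (for which $\binom{n-1}{i}=0$) are $0$, and when $k=1$ the term $(k-1)S_{\leq m}(n-i-1,k-1,r)$ is $0$.
   Context: For integers $N\ge 0$, $k\ge1$, $r\ge 0$, $m\ge1$, $S_{\leq m}(N,k,r)$ is the number of ways to partition $[N]=\{1,\dots,N\}$ into $r+k-1$ non-empty blocks, each of size at most $m$, where $r$ of the blocks receive the label $1$ (blocks with label $1$ are indistinguishable among themselves) and the remaining $k-1$ blocks receive the distinct labels $2,3,\dots,k$. (In particular $S_{\leq m}(0,1,0)=1$.) *)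

theory Defs
  imports Main "HOL-Library.Disjoint_Sets"
begin

text \<open>A labelled partition of {1..N}: a set U of r blocks with label 1 (unordered),
  and an injective assignment f of the distinct labels 2..k to further blocks
  (f is fixed to the empty set outside {2..k} so that each object is counted once).\<close>

definition labelled_partitions :: "nat \<Rightarrow> nat \<Rightarrow> nat \<Rightarrow> nat \<Rightarrow> (nat set set \<times> (nat \<Rightarrow> nat set)) set" where
  "labelled_partitions m N k r =
     {(U, f). partition_on {1..N} (U \<union> f ` {2..k})
            \<and> finite U \<and> card U = r
            \<and> inj_on f {2..k}
            \<and> U \<inter> f ` {2..k} = {}
            \<and> (\<forall>B \<in> U \<union> f ` {2..k}. card B \<le> m)
            \<and> (\<forall>i. i \<notin> {2..k} \<longrightarrow> f i = {})}"

definition S_le :: "nat \<Rightarrow> nat \<Rightarrow> nat \<Rightarrow> nat \<Rightarrow> nat" where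
  "S_le m N k r = card (labelled_partitions m N k r)"

end

theory Submission
  imports Defs
begin

(* Classify a labelled partition of an n-element set by the block B containing the element n.
   If |B| = i + 1, its other i elements can be chosen in (n - 1 choose i) ways.  Either B is one
   of the r unlabelled blocks, and removing it leaves a partition of the remaining n - i - 1
   elements with r - 1 unlabelled blocks, or B carries one of the k - 1 distinct labels j, and
   removing it leaves a partition whose labels are {2..k} - {j}.  Both counts are again values
   of S_le, because the number of labelled partitions of a finite ground set with a finite set
   of distinct labels depends only on the two cardinalities (transport along bijections). *)

definition labelled_partitions_on ::
    "nat \<Rightarrow> 'a set \<Rightarrow> 'l set \<Rightarrow> nat \<Rightarrow> ('a set set \<times> ('l \<Rightarrow> 'a set)) set" where
  "labelled_partitions_on m A L r =
     {(U, f). partition_on A (U \<union> f ` L)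
            \<and> finite U \<and> card U = r
            \<and> inj_on f L
            \<and> U \<inter> f ` L = {}
            \<and> (\<forall>B \<in> U \<union> f ` L. card B \<le> m)
            \<and> (\<forall>i. i \<notin> L \<longrightarrow> f i = {})}"

lemma mem_labelled_partitions_on:
  "(U, f) \<in> labelled_partitions_on m A L r \<longleftrightarrow>
     partition_on A (U \<union> f ` L) \<and> finite U \<and> card U = r \<and> inj_on f L \<and> U \<inter> f ` L = {}
     \<and> (\<forall>B \<in> U \<union> f ` L. card B \<le> m) \<and> (\<forall>i. i \<notin> L \<longrightarrow> f i = {})"
  unfolding labelled_partitions_on_def by simp

lemma labelled_partitions_eq_on: "labelled_partitions m N k r = labelled_partitions_on m {1..N} {2..k} r"
  unfolding labelled_partitions_def labelled_partitions_on_def ..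

lemma labelled_partitions_on_block_subset:
  "(U, f) \<in> labelled_partitions_on m A L r \<Longrightarrow> B \<in> U \<union> f ` L \<Longrightarrow> B \<subseteq> A"
  unfolding labelled_partitions_on_def by (auto dest: partition_onD1)

lemma finite_labelled_partitions_on:
  assumes "finite A" "finite L"
  shows "finite (labelled_partitions_on m A L r)"
proof (rule finite_subset)
  show "labelled_partitions_on m A L r \<subseteq> Pow (Pow A) \<times> {f. \<forall>i. (i \<in> L \<longrightarrow> f i \<in> Pow A) \<and> (i \<notin> L \<longrightarrow> f i = {})}"
    by (auto dest: labelled_partitions_on_block_subset) (auto simp: labelled_partitions_on_def)
  show "finite (Pow (Pow A) \<times> {f. \<forall>i. (i \<in> L \<longrightarrow> f i \<in> Pow A) \<and> (i \<notin> L \<longrightarrow> f i = {})})"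
    using assms by (intro finite_cartesian_product finite_set_of_finite_funs) auto
qed

definition rename_elements ::
    "('a \<Rightarrow> 'b) \<Rightarrow> 'a set set \<times> ('l \<Rightarrow> 'a set) \<Rightarrow> 'b set set \<times> ('l \<Rightarrow> 'b set)" where
  "rename_elements g = (\<lambda>(U, f). ((`) g ` U, (`) g \<circ> f))"

definition rename_labels ::
    "('l' \<Rightarrow> 'l) \<Rightarrow> 'l' set \<Rightarrow> 'a set set \<times> ('l \<Rightarrow> 'a set) \<Rightarrow> 'a set set \<times> ('l' \<Rightarrow> 'a set)" where
  "rename_labels h L' = (\<lambda>(U, f). (U, \<lambda>i. if i \<in> L' then f (h i) else {}))"

lemma rename_elements_mem:
  assumes g: "inj_on g A" and x: "x \<in> labelled_partitions_on m A L r"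
  shows "rename_elements g x \<in> labelled_partitions_on m (g ` A) L r"
proof -
  obtain U f where x_eq: "x = (U, f)" by fastforce
  with x have P: "partition_on A (U \<union> f ` L)" and "finite U" "card U = r" "inj_on f L"
    and dis: "U \<inter> f ` L = {}" and small: "\<forall>B \<in> U \<union> f ` L. card B \<le> m"
    and "\<forall>i. i \<notin> L \<longrightarrow> f i = {}"
    unfolding labelled_partitions_on_def by auto
  have sub: "U \<union> f ` L \<subseteq> Pow A" using partition_onD1[OF P] by auto
  have inj_img: "inj_on ((`) g) (U \<union> f ` L)"
    using inj_on_subset[OF inj_on_image_Pow[OF g] sub] .
  have blocks: "(`) g ` U \<union> ((`) g \<circ> f) ` L = (`) g ` (U \<union> f ` L)"
    by (auto simp: image_comp)
  have "partition_on (g ` A) ((`) g ` (U \<union> f ` L) - {{}})"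
    using partition_on_inj_image[OF P g] .
  moreover have "{} \<notin> (`) g ` (U \<union> f ` L)"
    using partition_onD3[OF P] by auto
  ultimately have "partition_on (g ` A) ((`) g ` (U \<union> f ` L))"
    by simp
  then have "partition_on (g ` A) ((`) g ` U \<union> ((`) g \<circ> f) ` L)"
    by (simp only: blocks)
  moreover have "card ((`) g ` U) = r"
    using \<open>card U = r\<close> card_image[OF inj_on_subset[OF inj_img]] by auto
  moreover have "inj_on ((`) g \<circ> f) L"
    using \<open>inj_on f L\<close> inj_on_subset[OF inj_img] by (intro comp_inj_on) auto
  moreover have "(`) g ` U \<inter> ((`) g \<circ> f) ` L = {}"
    using dis inj_on_image_Int[OF inj_img, of U "f ` L"] by (simp add: image_comp)
  moreover have "card (g ` B) \<le> m" if "B \<in> U \<union> f ` L" for B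
    using that small sub g by (subst card_image) (auto intro: inj_on_subset)
  ultimately show ?thesis
    using \<open>finite U\<close> \<open>\<forall>i. i \<notin> L \<longrightarrow> f i = {}\<close>
    unfolding x_eq rename_elements_def labelled_partitions_on_def by auto
qed

lemma inj_on_rename_elements:
  assumes g: "inj_on g A"
  shows "inj_on (rename_elements g) (labelled_partitions_on m A L r)"
proof (rule inj_onI)
  fix x y assume x: "x \<in> labelled_partitions_on m A L r" and y: "y \<in> labelled_partitions_on m A L r"
    and eq: "rename_elements g x = rename_elements g y"
  obtain U f V e where x_eq: "x = (U, f)" and y_eq: "y = (V, e)" by fastforce
  have inj_img: "inj_on ((`) g) (Pow A)" using inj_on_image_Pow[OF g] .
  have img_U: "(`) g ` U = (`) g ` V" and img_f: "\<And>i. g ` f i = g ` e i"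
    using eq unfolding x_eq y_eq rename_elements_def by (simp_all add: fun_eq_iff)
  have "U \<subseteq> Pow A" "V \<subseteq> Pow A"
    using x y unfolding x_eq y_eq by (auto dest: labelled_partitions_on_block_subset)
  then have "U = V" using inj_on_image_eq_iff[OF inj_img] img_U by blast
  moreover have "f i = e i" for i
  proof (cases "i \<in> L")
    case True
    have "f i \<in> Pow A" "e i \<in> Pow A"
      using x y True unfolding x_eq y_eq by (auto dest: labelled_partitions_on_block_subset)
    then show ?thesis using inj_onD[OF inj_img img_f] by blast
  next
    case False
    then show ?thesis using x y unfolding x_eq y_eq labelled_partitions_on_def by auto
  qed
  ultimately show "x = y" unfolding x_eq y_eq by auto
qed

lemma rename_labels_mem:
  assumes h: "bij_betw h L' L" and x: "x \<in> labelled_partitions_on m A L r"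
  shows "rename_labels h L' x \<in> labelled_partitions_on m A L' r"
proof -
  obtain U f where x_eq: "x = (U, f)" by fastforce
  define f' where "f' = (\<lambda>i. if i \<in> L' then f (h i) else {})"
  have "f' ` L' = f ` L"
    using bij_betw_imp_surj_on[OF h] by (auto simp: f'_def image_image)
  moreover have "inj_on f' L'"
  proof -
    have "inj_on (f \<circ> h) L'"
      using x bij_betw_imp_inj_on[OF h] bij_betw_imp_surj_on[OF h]
      unfolding x_eq labelled_partitions_on_def by (intro comp_inj_on) auto
    then show ?thesis by (rule inj_on_cong[THEN iffD1, rotated]) (simp add: f'_def)
  qed
  ultimately show ?thesis
    using x unfolding x_eq rename_labels_def labelled_partitions_on_def by (auto simp: f'_def)
qed

lemma inj_on_rename_labels:
  assumes h: "h ` L' = L"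
  shows "inj_on (rename_labels h L') (labelled_partitions_on m A L r)"
proof (rule inj_onI)
  fix x y assume x: "x \<in> labelled_partitions_on m A L r" and y: "y \<in> labelled_partitions_on m A L r"
    and eq: "rename_labels h L' x = rename_labels h L' y"
  obtain U f V e where x_eq: "x = (U, f)" and y_eq: "y = (V, e)" by fastforce
  have "f i = e i" for i
  proof (cases "i \<in> L")
    case True
    then obtain i' where "i' \<in> L'" "i = h i'" using h by auto
    moreover have "(\<lambda>i. if i \<in> L' then f (h i) else {}) = (\<lambda>i. if i \<in> L' then e (h i) else {})"
      using eq unfolding x_eq y_eq rename_labels_def by simp
    ultimately show ?thesis by (metis (mono_tags))
  next
    case False
    then show ?thesis using x y unfolding x_eq y_eq labelled_partitions_on_def by auto
  qed
  then show "x = y" using eq unfolding x_eq y_eq rename_labels_def by auto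
qed

lemma card_labelled_partitions_on_rename_elements:
  assumes g: "bij_betw g A A'" and "finite A" "finite L"
  shows "card (labelled_partitions_on m A L r) = card (labelled_partitions_on m A' L r)"
proof (rule card_bij_eq)
  have g': "bij_betw (inv_into A g) A' A"
    using g by (rule bij_betw_inv_into)
  show "inj_on (rename_elements g) (labelled_partitions_on m A L r)"
    using inj_on_rename_elements[OF bij_betw_imp_inj_on[OF g]] .
  show "inj_on (rename_elements (inv_into A g)) (labelled_partitions_on m A' L r)"
    using inj_on_rename_elements[OF bij_betw_imp_inj_on[OF g']] .
  show "rename_elements g ` labelled_partitions_on m A L r \<subseteq> labelled_partitions_on m A' L r"
    using rename_elements_mem[OF bij_betw_imp_inj_on[OF g]]
    unfolding bij_betw_imp_surj_on[OF g] by blast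
  show "rename_elements (inv_into A g) ` labelled_partitions_on m A' L r \<subseteq> labelled_partitions_on m A L r"
    using rename_elements_mem[OF bij_betw_imp_inj_on[OF g']]
    unfolding bij_betw_imp_surj_on[OF g'] by blast
  show "finite (labelled_partitions_on m A L r)" "finite (labelled_partitions_on m A' L r)"
    using assms bij_betw_finite[OF g] by (simp_all add: finite_labelled_partitions_on)
qed

lemma card_labelled_partitions_on_rename_labels:
  assumes h: "bij_betw h L' L" and "finite A" "finite L"
  shows "card (labelled_partitions_on m A L r) = card (labelled_partitions_on m A L' r)"
proof (rule card_bij_eq)
  have h': "bij_betw (inv_into L' h) L L'"
    using h by (rule bij_betw_inv_into)
  show "inj_on (rename_labels h L') (labelled_partitions_on m A L r)"
    "inj_on (rename_labels (inv_into L' h) L) (labelled_partitions_on m A L' r)"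
    using inj_on_rename_labels[OF bij_betw_imp_surj_on[OF h]]
      inj_on_rename_labels[OF bij_betw_imp_surj_on[OF h']] .
  show "rename_labels h L' ` labelled_partitions_on m A L r \<subseteq> labelled_partitions_on m A L' r"
    "rename_labels (inv_into L' h) L ` labelled_partitions_on m A L' r \<subseteq> labelled_partitions_on m A L r"
    using rename_labels_mem[OF h] rename_labels_mem[OF h'] by blast+
  show "finite (labelled_partitions_on m A L r)" "finite (labelled_partitions_on m A L' r)"
    using assms bij_betw_finite[OF h] by (simp_all add: finite_labelled_partitions_on)
qed

lemma card_labelled_partitions_on:
  assumes "finite A" "finite L"
  shows "card (labelled_partitions_on m A L r) = S_le m (card A) (card L + 1) r"
proof -
  obtain g where g: "bij_betw g A {1..card A}"
    using finite_same_card_bij[OF \<open>finite A\<close> finite_atLeastAtMost, of 1 "card A"] by auto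
  obtain h where h: "bij_betw h {2..card L + 1} L"
    using finite_same_card_bij[OF finite_atLeastAtMost \<open>finite L\<close>, of 2 "card L + 1"] by auto
  have "card (labelled_partitions_on m A L r) = card (labelled_partitions_on m {1..card A} L r)"
    using card_labelled_partitions_on_rename_elements[OF g assms] .
  also have "\<dots> = card (labelled_partitions_on m {1..card A} {2..card L + 1} r)"
    using card_labelled_partitions_on_rename_labels[OF h finite_atLeastAtMost \<open>finite L\<close>] .
  also have "\<dots> = S_le m (card A) (card L + 1) r"
    unfolding S_le_def labelled_partitions_eq_on ..
  finally show ?thesis .
qed

lemma partition_on_insert_notin:
  assumes "B \<notin> P"
  shows "partition_on A (insert B P) \<longleftrightarrow> partition_on (A - B) P \<and> B \<subseteq> A \<and> B \<noteq> {}"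
proof
  assume P: "partition_on A (insert B P)"
  have "\<forall>p \<in> P. disjnt B p"
    using partition_onD2[OF P] assms unfolding pairwise_insert by blast
  then show "partition_on (A - B) P \<and> B \<subseteq> A \<and> B \<noteq> {}"
    using partition_on_insert P by (metis disjnt_Union2)
next
  assume P: "partition_on (A - B) P \<and> B \<subseteq> A \<and> B \<noteq> {}"
  then have "\<Union>P = A - B"
    using partition_onD1 by metis
  then have "disjnt B (\<Union>P)"
    by (simp add: disjnt_def)
  then show "partition_on A (insert B P)"
    using partition_on_insert P by blast
qed

lemma block_notin_labelled_partitions_on_Diff:
  assumes "(U, f) \<in> labelled_partitions_on m (A - B) L r" "B \<noteq> {}"
  shows "B \<notin> U \<union> f ` L"
  using labelled_partitions_on_block_subset[OF assms(1)] assms(2) by blast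

lemma insert_unlabelled_block_mem_iff:
  assumes "B \<notin> U" "r \<ge> 1"
  shows "(insert B U, f) \<in> labelled_partitions_on m A L r \<longleftrightarrow>
    (U, f) \<in> labelled_partitions_on m (A - B) L (r - 1) \<and> B \<subseteq> A \<and> B \<noteq> {} \<and> card B \<le> m"
proof (cases "B \<in> f ` L")
  case True
  have "insert B U \<inter> f ` L \<noteq> {}"
    using True by blast
  then have "(insert B U, f) \<notin> labelled_partitions_on m A L r"
    unfolding mem_labelled_partitions_on by blast
  moreover have "B = {}" if "(U, f) \<in> labelled_partitions_on m (A - B) L (r - 1)"
    using block_notin_labelled_partitions_on_Diff[OF that] True by blast
  ultimately show ?thesis by blast
next
  case False
  then have "B \<notin> U \<union> f ` L" using assms by auto
  moreover have "card (insert B U) = r \<longleftrightarrow> card U = r - 1" if "finite U"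
    using that assms by auto
  moreover have "insert B U \<inter> f ` L = {} \<longleftrightarrow> U \<inter> f ` L = {}"
    using False by auto
  ultimately show ?thesis
    unfolding mem_labelled_partitions_on Un_insert_left partition_on_insert_notin[OF \<open>B \<notin> U \<union> f ` L\<close>]
    by auto
qed

lemma update_labelled_block_mem_iff:
  assumes "j \<in> L" "f j = {}"
  shows "(U, f(j := B)) \<in> labelled_partitions_on m A L r \<longleftrightarrow>
    (U, f) \<in> labelled_partitions_on m (A - B) (L - {j}) r \<and> B \<subseteq> A \<and> B \<noteq> {} \<and> card B \<le> m"
proof -
  have image_upd: "(f(j := B)) ` L = insert B (f ` (L - {j}))"
    using \<open>j \<in> L\<close> by auto
  show ?thesis
  proof (cases "B \<in> U \<union> f ` (L - {j})")
    case True
    have "\<not> (inj_on (f(j := B)) L \<and> U \<inter> (f(j := B)) ` L = {})"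
    proof
      assume "inj_on (f(j := B)) L \<and> U \<inter> (f(j := B)) ` L = {}"
      then have "B \<notin> (f(j := B)) ` (L - {j})" "B \<notin> U"
        using inj_on_image_set_diff[of "f(j := B)" L L "{j}"] \<open>j \<in> L\<close> image_upd by auto
      then show False
        using True by auto
    qed
    then have "(U, f(j := B)) \<notin> labelled_partitions_on m A L r"
      unfolding mem_labelled_partitions_on by blast
    moreover have "B = {}" if "(U, f) \<in> labelled_partitions_on m (A - B) (L - {j}) r"
      using block_notin_labelled_partitions_on_Diff[OF that] True by blast
    ultimately show ?thesis by blast
  next
    case False
    have "L = insert j (L - {j})" using \<open>j \<in> L\<close> by blast
    then have "inj_on (f(j := B)) L \<longleftrightarrow> inj_on (f(j := B)) (L - {j}) \<and> B \<notin> (f(j := B)) ` (L - {j})"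
      by (metis inj_on_insert Diff_idemp fun_upd_same)
    also have "\<dots> \<longleftrightarrow> inj_on f (L - {j})"
      using False by (simp add: inj_on_def)
    finally have "inj_on (f(j := B)) L \<longleftrightarrow> inj_on f (L - {j})" .
    moreover have "U \<inter> insert B (f ` (L - {j})) = {} \<longleftrightarrow> U \<inter> f ` (L - {j}) = {}"
      using False by auto
    moreover have "(\<forall>i. i \<notin> L \<longrightarrow> (f(j := B)) i = {}) \<longleftrightarrow> (\<forall>i. i \<notin> L - {j} \<longrightarrow> f i = {})"
      using assms by auto
    ultimately show ?thesis
      using False unfolding mem_labelled_partitions_on image_upd Un_insert_right
        partition_on_insert_notin[OF False]
      by auto
  qed
qed

lemma card_labelled_partitions_on_unlabelled_block:
  assumes "B \<subseteq> A" "B \<noteq> {}" "card B \<le> m" "r \<ge> 1"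
  shows "card {x \<in> labelled_partitions_on m A L r. B \<in> fst x} =
    card (labelled_partitions_on m (A - B) L (r - 1))"
proof -
  let ?ins = "\<lambda>(U, f). (insert B U, f)"
  have "{x \<in> labelled_partitions_on m A L r. B \<in> fst x} = ?ins ` labelled_partitions_on m (A - B) L (r - 1)"
  proof (intro equalityI subsetI)
    fix x assume x: "x \<in> {x \<in> labelled_partitions_on m A L r. B \<in> fst x}"
    obtain U f where x_eq: "x = (U, f)" by fastforce
    with x have "B \<in> U" "(insert B (U - {B}), f) \<in> labelled_partitions_on m A L r"
      by (simp_all add: insert_absorb)
    then have "(U - {B}, f) \<in> labelled_partitions_on m (A - B) L (r - 1)"
      using insert_unlabelled_block_mem_iff[of B "U - {B}" r f m A L] \<open>r \<ge> 1\<close> by blast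
    moreover have "x = ?ins (U - {B}, f)"
      using x_eq \<open>B \<in> U\<close> by (simp add: insert_absorb)
    ultimately show "x \<in> ?ins ` labelled_partitions_on m (A - B) L (r - 1)"
      by blast
  next
    fix x assume "x \<in> ?ins ` labelled_partitions_on m (A - B) L (r - 1)"
    then obtain U f where x_eq: "x = (insert B U, f)"
      and U: "(U, f) \<in> labelled_partitions_on m (A - B) L (r - 1)"
      by fastforce
    have "B \<notin> U"
      using block_notin_labelled_partitions_on_Diff[OF U \<open>B \<noteq> {}\<close>] by blast
    then have "(insert B U, f) \<in> labelled_partitions_on m A L r"
      using insert_unlabelled_block_mem_iff[of B U r f m A L] U assms by blast
    then show "x \<in> {x \<in> labelled_partitions_on m A L r. B \<in> fst x}"
      using x_eq by simp
  qed
  moreover have "inj_on ?ins (labelled_partitions_on m (A - B) L (r - 1))"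
  proof (rule inj_onI)
    fix x y assume x: "x \<in> labelled_partitions_on m (A - B) L (r - 1)"
      and y: "y \<in> labelled_partitions_on m (A - B) L (r - 1)" and eq: "?ins x = ?ins y"
    obtain U f V g where xy: "x = (U, f)" "y = (V, g)" by fastforce
    have "B \<notin> U" "B \<notin> V"
      using block_notin_labelled_partitions_on_Diff[OF x[unfolded xy(1)] \<open>B \<noteq> {}\<close>]
        block_notin_labelled_partitions_on_Diff[OF y[unfolded xy(2)] \<open>B \<noteq> {}\<close>] by simp_all
    with eq show "x = y"
      unfolding xy by (simp add: insert_ident)
  qed
  ultimately show ?thesis
    by (simp add: card_image)
qed

lemma card_labelled_partitions_on_labelled_block:
  assumes "j \<in> L" "B \<subseteq> A" "B \<noteq> {}" "card B \<le> m"
  shows "card {x \<in> labelled_partitions_on m A L r. snd x j = B} =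
    card (labelled_partitions_on m (A - B) (L - {j}) r)"
proof -
  let ?upd = "\<lambda>(U, f). (U, f(j := B))"
  have "{x \<in> labelled_partitions_on m A L r. snd x j = B} = ?upd ` labelled_partitions_on m (A - B) (L - {j}) r"
  proof (intro equalityI subsetI)
    fix x assume x_mem: "x \<in> {x \<in> labelled_partitions_on m A L r. snd x j = B}"
    obtain U f where x_eq: "x = (U, f)" by fastforce
    with x_mem have x: "x = (U, f)" "(U, f) \<in> labelled_partitions_on m A L r" "f j = B"
      by simp_all
    then have "(U, (f(j := {}))(j := B)) \<in> labelled_partitions_on m A L r"
      by (simp add: fun_upd_idem)
    then have "(U, f(j := {})) \<in> labelled_partitions_on m (A - B) (L - {j}) r"
      using update_labelled_block_mem_iff[of j L "f(j := {})" U B m A r] assms by simp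
    moreover have "x = ?upd (U, f(j := {}))"
      using x by (simp add: fun_upd_idem)
    ultimately show "x \<in> ?upd ` labelled_partitions_on m (A - B) (L - {j}) r"
      by blast
  next
    fix x assume "x \<in> ?upd ` labelled_partitions_on m (A - B) (L - {j}) r"
    then obtain U f where x_eq: "x = (U, f(j := B))"
      and U: "(U, f) \<in> labelled_partitions_on m (A - B) (L - {j}) r"
      by fastforce
    have "f j = {}"
      using U by (simp add: mem_labelled_partitions_on)
    then have "(U, f(j := B)) \<in> labelled_partitions_on m A L r"
      using update_labelled_block_mem_iff[of j L f U B m A r] U assms by blast
    then show "x \<in> {x \<in> labelled_partitions_on m A L r. snd x j = B}"
      using x_eq by simp
  qed
  moreover have "inj_on ?upd (labelled_partitions_on m (A - B) (L - {j}) r)"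
  proof (rule inj_onI)
    fix x y assume x: "x \<in> labelled_partitions_on m (A - B) (L - {j}) r"
      and y: "y \<in> labelled_partitions_on m (A - B) (L - {j}) r" and eq: "?upd x = ?upd y"
    obtain U f V g where xy: "x = (U, f)" "y = (V, g)" by fastforce
    have "f j = {}" "g j = {}"
      using x y unfolding xy by (simp_all add: mem_labelled_partitions_on)
    moreover have "U = V" "f(j := B) = g(j := B)"
      using eq unfolding xy by simp_all
    ultimately show "x = y"
      unfolding xy by (metis fun_upd_idem fun_upd_upd)
  qed
  ultimately show ?thesis
    by (simp add: card_image)
qed

lemma card_labelled_partitions_on_having_block:
  assumes "finite A" "finite L"
  shows "card {x \<in> labelled_partitions_on m A L r. B \<in> fst x \<union> snd x ` L} =
    card {x \<in> labelled_partitions_on m A L r. B \<in> fst x}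
    + (\<Sum>j\<in>L. card {x \<in> labelled_partitions_on m A L r. snd x j = B})"
proof -
  let ?P = "labelled_partitions_on m A L r"
  have fin: "finite ?P"
    using finite_labelled_partitions_on[OF assms] .
  have "{x \<in> ?P. B \<in> fst x \<union> snd x ` L} = {x \<in> ?P. B \<in> fst x} \<union> (\<Union>j\<in>L. {x \<in> ?P. snd x j = B})"
    by auto
  moreover have "{x \<in> ?P. B \<in> fst x} \<inter> (\<Union>j\<in>L. {x \<in> ?P. snd x j = B}) = {}"
  proof -
    have "B \<notin> snd x ` L" if "x \<in> ?P" "B \<in> fst x" for x
      using that by (cases x) (auto simp: mem_labelled_partitions_on)
    then show ?thesis by blast
  qed
  moreover have "disjoint_family_on (\<lambda>j. {x \<in> ?P. snd x j = B}) L"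
  proof -
    have "inj_on (snd x) L" if "x \<in> ?P" for x
      using that by (cases x) (simp add: mem_labelled_partitions_on)
    then show ?thesis
      unfolding disjoint_family_on_def by (blast dest: inj_onD)
  qed
  ultimately show ?thesis
    using fin \<open>finite L\<close> by (simp add: card_Un_disjoint card_UN_disjoint')
qed

lemma card_labelled_partitions_on_by_block:
  assumes "finite A" "finite L" "a \<in> A"
  shows "card (labelled_partitions_on m A L r) =
    (\<Sum>B | a \<in> B \<and> B \<subseteq> A \<and> card B \<le> m.
      card {x \<in> labelled_partitions_on m A L r. B \<in> fst x \<union> snd x ` L})"
proof -
  let ?P = "labelled_partitions_on m A L r"
  let ?Bs = "{B. a \<in> B \<and> B \<subseteq> A \<and> card B \<le> m}"
  let ?having = "\<lambda>B. {x \<in> ?P. B \<in> fst x \<union> snd x ` L}"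
  have "?P \<subseteq> (\<Union>B\<in>?Bs. ?having B)"
  proof
    fix x assume x: "x \<in> ?P"
    obtain U f where x_eq: "x = (U, f)" by fastforce
    with x have P: "partition_on A (U \<union> f ` L)" and small: "\<forall>B \<in> U \<union> f ` L. card B \<le> m"
      by (simp_all add: mem_labelled_partitions_on)
    have "a \<in> \<Union>(U \<union> f ` L)"
      using partition_onD1[OF P] \<open>a \<in> A\<close> by simp
    then obtain B where B: "B \<in> U \<union> f ` L" "a \<in> B"
      by blast
    have "B \<subseteq> A" "card B \<le> m"
      using labelled_partitions_on_block_subset[OF x[unfolded x_eq] B(1)] small B(1) by simp_all
    with B have "B \<in> ?Bs" "x \<in> ?having B"
      using x x_eq by simp_all
    then show "x \<in> (\<Union>B\<in>?Bs. ?having B)"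
      by blast
  qed
  then have P_eq: "?P = (\<Union>B\<in>?Bs. ?having B)"
    by blast
  have "?having B \<inter> ?having B' = {}" if "B \<in> ?Bs" "B' \<in> ?Bs" "B \<noteq> B'" for B B'
  proof (rule ccontr)
    assume "?having B \<inter> ?having B' \<noteq> {}"
    then obtain x where x: "x \<in> ?P" "B \<in> fst x \<union> snd x ` L" "B' \<in> fst x \<union> snd x ` L"
      by blast
    have "disjoint (fst x \<union> snd x ` L)"
      using x(1) by (cases x) (auto simp: mem_labelled_partitions_on dest: partition_onD2)
    then have "B \<inter> B' = {}"
      using disjointD x(2,3) \<open>B \<noteq> B'\<close> by blast
    then show False
      using that by blast
  qed
  moreover have "finite ?Bs"
    using \<open>finite A\<close> by (auto intro: finite_subset[of _ "Pow A"])
  moreover have "finite (?having B)" for B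
    using finite_labelled_partitions_on[OF \<open>finite A\<close> \<open>finite L\<close>] by simp
  ultimately have "card (\<Union>B\<in>?Bs. ?having B) = (\<Sum>B\<in>?Bs. card (?having B))"
    by (intro card_UN_disjoint) blast+
  then show ?thesis
    unfolding P_eq[symmetric] .
qed

lemma card_labelled_partitions_on_rec:
  assumes "finite A" "finite L" "a \<in> A" "r \<ge> 1"
  shows "card (labelled_partitions_on m A L r) =
    (\<Sum>B | a \<in> B \<and> B \<subseteq> A \<and> card B \<le> m.
      S_le m (card A - card B) (card L + 1) (r - 1) + card L * S_le m (card A - card B) (card L) r)"
  unfolding card_labelled_partitions_on_by_block[OF assms(1-3)]
proof (rule sum.cong[OF refl])
  fix B assume B: "B \<in> {B. a \<in> B \<and> B \<subseteq> A \<and> card B \<le> m}"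
  then have "B \<noteq> {}" "B \<subseteq> A" "card B \<le> m" by auto
  have fin_rest: "finite (A - B)"
    using assms by simp
  have card_rest: "card (A - B) = card A - card B"
    using \<open>B \<subseteq> A\<close> \<open>finite A\<close> by (simp add: card_Diff_subset finite_subset)
  have "card {x \<in> labelled_partitions_on m A L r. B \<in> fst x} =
      card (labelled_partitions_on m (A - B) L (r - 1))"
    using \<open>B \<subseteq> A\<close> \<open>B \<noteq> {}\<close> \<open>card B \<le> m\<close> \<open>r \<ge> 1\<close>
    by (rule card_labelled_partitions_on_unlabelled_block)
  also have "\<dots> = S_le m (card A - card B) (card L + 1) (r - 1)"
    using card_labelled_partitions_on[OF fin_rest \<open>finite L\<close>] card_rest by simp
  finally have "card {x \<in> labelled_partitions_on m A L r. B \<in> fst x} =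
      S_le m (card A - card B) (card L + 1) (r - 1)" .
  moreover have "card {x \<in> labelled_partitions_on m A L r. snd x j = B} =
      S_le m (card A - card B) (card L) r" if "j \<in> L" for j
  proof -
    have "card (L - {j}) + 1 = card L"
      using card.remove[OF \<open>finite L\<close> that] by simp
    then show ?thesis
      using card_labelled_partitions_on_labelled_block[OF that \<open>B \<subseteq> A\<close> \<open>B \<noteq> {}\<close> \<open>card B \<le> m\<close>]
        card_labelled_partitions_on[OF fin_rest finite_Diff[OF \<open>finite L\<close>]] card_rest by simp
  qed
  ultimately show "card {x \<in> labelled_partitions_on m A L r. B \<in> fst x \<union> snd x ` L} =
      S_le m (card A - card B) (card L + 1) (r - 1) + card L * S_le m (card A - card B) (card L) r"
    using card_labelled_partitions_on_having_block[OF \<open>finite A\<close> \<open>finite L\<close>] by simp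
qed

lemma sum_subsets_card_le:
  fixes F :: "nat \<Rightarrow> 'a::comm_semiring_1"
  assumes "finite D"
  shows "(\<Sum>T | T \<subseteq> D \<and> card T \<le> M. F (card T)) = (\<Sum>i = 0..M. of_nat (card D choose i) * F i)"
proof -
  let ?Ts = "{T. T \<subseteq> D \<and> card T \<le> M}"
  have "finite ?Ts"
    using assms by (auto intro: finite_subset[of _ "Pow D"])
  then have "(\<Sum>T\<in>?Ts. F (card T)) = (\<Sum>i = 0..M. \<Sum>T | T \<in> ?Ts \<and> card T = i. F (card T))"
    by (rule sum.group[symmetric]) auto
  also have "\<dots> = (\<Sum>i = 0..M. \<Sum>T | T \<subseteq> D \<and> card T = i. F i)"
    by (intro sum.cong) auto
  also have "\<dots> = (\<Sum>i = 0..M. of_nat (card D choose i) * F i)"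
    using n_subsets[OF assms] by simp
  finally show ?thesis .
qed

lemma sum_subsets_containing_card_le:
  assumes "finite A" "a \<in> A" "m \<ge> 1"
  shows "(\<Sum>B | a \<in> B \<and> B \<subseteq> A \<and> card B \<le> m. F (card B)) =
    (\<Sum>T | T \<subseteq> A - {a} \<and> card T \<le> m - 1. F (Suc (card T)))"
proof (rule sum.reindex_bij_witness[where j = "\<lambda>B. B - {a}" and i = "insert a"])
  have card_insert: "card (insert a T) = Suc (card T)" if "T \<subseteq> A - {a}" for T
    using that \<open>finite A\<close> by (subst card_insert_disjoint) (auto intro: finite_subset)
  show "insert a (B - {a}) = B" if "B \<in> {B. a \<in> B \<and> B \<subseteq> A \<and> card B \<le> m}" for B
    using that by auto
  show "insert a T - {a} = T" if "T \<in> {T. T \<subseteq> A - {a} \<and> card T \<le> m - 1}" for T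
    using that by auto
  show "insert a T \<in> {B. a \<in> B \<and> B \<subseteq> A \<and> card B \<le> m}"
    if "T \<in> {T. T \<subseteq> A - {a} \<and> card T \<le> m - 1}" for T
    using that card_insert[of T] \<open>a \<in> A\<close> \<open>m \<ge> 1\<close> by auto
  show "B - {a} \<in> {T. T \<subseteq> A - {a} \<and> card T \<le> m - 1}"
    and "F (Suc (card (B - {a}))) = F (card B)"
    if "B \<in> {B. a \<in> B \<and> B \<subseteq> A \<and> card B \<le> m}" for B
  proof -
    have "Suc (card (B - {a})) = card B"
      using that \<open>finite A\<close> card_Suc_Diff1[of B a] finite_subset[of B A] by simp
    with that show "B - {a} \<in> {T. T \<subseteq> A - {a} \<and> card T \<le> m - 1}" "F (Suc (card (B - {a}))) = F (card B)"
      by auto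
  qed
qed

theorem mainTheorem3:
  fixes n m k r :: nat
  assumes "n \<ge> 1" "m \<ge> 1" "k \<ge> 1" "r \<ge> 1"
  shows "S_le m n k r =
    (\<Sum>i = 0..m - 1. (n - 1 choose i) *
        ((k - 1) * S_le m (n - i - 1) (k - 1) r + S_le m (n - i - 1) k (r - 1)))"
proof -
  let ?G = "\<lambda>c. (k - 1) * S_le m (n - c) (k - 1) r + S_le m (n - c) k (r - 1)"
  have card_labels: "card {2..k} = k - 1" "card {2..k} + 1 = k"
    using assms by auto
  have "S_le m n k r = card (labelled_partitions_on m {1..n} {2..k} r)"
    unfolding S_le_def labelled_partitions_eq_on ..
  also have "\<dots> = (\<Sum>B | n \<in> B \<and> B \<subseteq> {1..n} \<and> card B \<le> m. ?G (card B))"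
    using card_labelled_partitions_on_rec[of "{1..n}" "{2..k}" n r m] assms
    unfolding card_labels by (simp add: add.commute)
  also have "\<dots> = (\<Sum>T | T \<subseteq> {1..n} - {n} \<and> card T \<le> m - 1. ?G (Suc (card T)))"
    using assms by (intro sum_subsets_containing_card_le) auto
  also have "\<dots> = (\<Sum>i = 0..m - 1. (n - 1 choose i) * ?G (Suc i))"
    using sum_subsets_card_le[of "{1..n} - {n}" "\<lambda>i. ?G (Suc i)" "m - 1"] assms by simp
  finally show ?thesis
    by simp
qed

end
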